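(* Let $C=\{c_1,\dots,c_m\}$ and fix the axis $c_1\lhd\dots\lhd c_m$. For all $i,j\in[m]$, the probability that candidate $c_j$ appears in position $i$ in a vote sampled from the Walsh distribution $\mathcal{D}_{\mathrm{SP}}^{\mathrm{Wal}}$ is \[\frac{1}{2^{m-i+1}}\binom{m-i}{j-1}\mathbb{1}_{j\le m-i+1}+\frac{1}{2^{m-i+1}}\binom{m-i}{j-i}\mathbb{1}_{j>i-1}.\]
   Context: A vote over $C$ is a total order on $C$ (position 1 is the top). A vote is single-peaked with respect to the axis $c_1\lhd\dots\lhd c_m$ if for every $t\in[m]$ its $t$ top-ranked candidates form a set of consecutive candidates $\{c_a,c_{a+1},\dots,c_b\}$. The Walsh distribution $\mathcal{D}_{\mathrm{SP}}^{\mathrm{Wal}}$ assigns probability $1/2^{m-1}$ to each vote single-peaked with respect to this axis and probability $0$ to all other votes. $\mathbb{1}$ denotes an indicator. *)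

theory Defs
  imports "HOL-Analysis.Analysis"
begin

text \<open>Candidates c_1,...,c_m are represented by the numbers 1..m (c_k = k), with the axis
  1 < 2 < ... < m. A vote is a list listing all candidates exactly once; position p (1-based)
  holds the candidate v ! (p - 1).\<close>

definition is_vote :: "nat \<Rightarrow> nat list \<Rightarrow> bool" where
  "is_vote m v \<longleftrightarrow> distinct v \<and> set v = {1..m}"

definition single_peaked :: "nat \<Rightarrow> nat list \<Rightarrow> bool" where
  "single_peaked m v \<longleftrightarrow>
     is_vote m v \<and> (\<forall>t\<in>{1..m}. \<exists>a b. set (take t v) = {a..b})"

definition walsh_prob :: "nat \<Rightarrow> nat list \<Rightarrow> real" where
  "walsh_prob m v = (if single_peaked m v then 1 / 2 ^ (m - 1) else 0)"

definition walsh_event_prob :: "nat \<Rightarrow> (nat list \<Rightarrow> bool) \<Rightarrow> real" where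
  "walsh_event_prob m P = (\<Sum>v\<in>{v. is_vote m v \<and> P v}. walsh_prob m v)"

end

theory Submission
  imports Defs
begin

(* Read from the bottom, a single-peaked vote ranks last one of the two end points of the
  interval of candidates still to be ranked.  So the candidates below position k + 1 are taken
  from the two ends of the axis, and if r of them come from the left end, the candidate at
  position k + 1 is an end point 1 + r or 1 + r + k of the remaining interval; the k candidates
  above it can still be ordered in 2^(k-1) single-peaked ways.  Choosing which of the
  m - k - 1 lower candidates come from the left gives the two binomial coefficients.  Formally,
  the counts satisfy Pascal's recurrence along the recursion on the last-ranked candidate. *)

definition interval_prefixes :: "nat list \<Rightarrow> bool" where
  "interval_prefixes v \<longleftrightarrow> (\<forall>t. \<exists>x y. set (take t v) = {x..y})"

definition single_peaked_on :: "nat \<Rightarrow> nat \<Rightarrow> nat list \<Rightarrow> bool" where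
  "single_peaked_on a n v \<longleftrightarrow> distinct v \<and> set v = {a..<a + n} \<and> interval_prefixes v"

lemma interval_prefixes_Nil [simp]: "interval_prefixes []"
  unfolding interval_prefixes_def by (auto intro: exI[of _ "1::nat"] exI[of _ "0::nat"])

lemma interval_prefixes_altdef:
  "interval_prefixes v \<longleftrightarrow> (\<forall>t\<in>{1..length v}. \<exists>x y. set (take t v) = {x..y})"
  unfolding interval_prefixes_def
proof (intro iffI ballI allI)
  fix t assume prefix: "\<forall>t\<in>{1..length v}. \<exists>x y. set (take t v) = {x..y}"
  show "\<exists>x y. set (take t v) = {x..y}"
  proof (cases "t = 0 \<or> v = []")
    case True
    then show ?thesis by (intro exI[of _ 1] exI[of _ 0]) auto
  next
    case False
    then have "min t (length v) \<in> {1..length v}" by (auto simp: Suc_le_eq)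
    then show ?thesis using prefix by (metis min_def nle_le take_all)
  qed
qed simp

lemma interval_prefixes_snoc:
  "interval_prefixes (w @ [c]) \<longleftrightarrow> interval_prefixes w \<and> (\<exists>x y. set (w @ [c]) = {x..y})"
proof -
  have "take t (w @ [c]) = (if t \<le> length w then take t w else w @ [c])" for t
    by simp
  moreover have "take t w = take (min t (length w)) (w @ [c])" for t
    by (simp add: min_def)
  ultimately show ?thesis
    unfolding interval_prefixes_def by (metis order.refl take_all)
qed

lemma length_single_peaked_on: "single_peaked_on a n v \<Longrightarrow> length v = n"
  unfolding single_peaked_on_def by (metis card_atLeastLessThan diff_add_inverse distinct_card)

lemma single_peaked_iff_single_peaked_on: "single_peaked m v \<longleftrightarrow> single_peaked_on 1 m v"
proof -
  have "{1..<1 + m} = {1..m}" by auto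
  moreover have "length v = m" if "set v = {1..m}" "distinct v"
    using that distinct_card by fastforce
  ultimately show ?thesis
    unfolding single_peaked_def single_peaked_on_def is_vote_def interval_prefixes_altdef
    by auto
qed

lemma interval_diff_singleton_endpoint:
  fixes a b c :: "'a :: linorder"
  assumes "{x..y} = {a..b} - {c}" and "c \<in> {a..b}"
  shows "c = a \<or> c = b"
proof (rule ccontr)
  assume "\<not> (c = a \<or> c = b)"
  then have "a < c" "c < b" using assms(2) by auto
  have mem: "z \<in> {x..y} \<longleftrightarrow> a \<le> z \<and> z \<le> b \<and> z \<noteq> c" for z
    using assms(1) by auto
  have "x \<le> a" "b \<le> y"
    using mem[of a] mem[of b] \<open>a < c\<close> \<open>c < b\<close> by auto
  then have "c \<in> {x..y}"
    using \<open>a < c\<close> \<open>c < b\<close> by (meson atLeastAtMost_iff less_imp_le order.trans)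
  then show False using mem by simp
qed

lemma single_peaked_on_snocI:
  assumes "single_peaked_on b n w" and "set (w @ [c]) = {a..<a + Suc n}"
  shows "single_peaked_on a (Suc n) (w @ [c])"
proof -
  have "distinct (w @ [c])"
    using assms length_single_peaked_on by (intro card_distinct) simp
  moreover have "set (w @ [c]) = {a..a + n}"
    using assms(2) by (simp add: atLeastLessThanSuc_atLeastAtMost)
  ultimately show ?thesis
    using assms unfolding single_peaked_on_def interval_prefixes_snoc by blast
qed

lemma single_peaked_on_snocD:
  assumes "single_peaked_on a (Suc (Suc n)) (w @ [c])"
  shows "c = a \<and> single_peaked_on (Suc a) (Suc n) w \<or> c = a + Suc n \<and> single_peaked_on a (Suc n) w"
proof -
  from assms have w: "distinct w" "interval_prefixes w" and "c \<notin> set w"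
    and sv: "insert c (set w) = {a..<a + Suc (Suc n)}"
    unfolding single_peaked_on_def interval_prefixes_snoc by simp_all
  have "{a..<a + Suc (Suc n)} = {a..a + Suc n}"
    by (rule set_eqI) (simp, arith)
  then have set_w: "set w = {a..a + Suc n} - {c}" and c: "c \<in> {a..a + Suc n}"
    using sv \<open>c \<notin> set w\<close> by blast+
  obtain x y where "set (take (length w) w) = {x..y}"
    using w(2) unfolding interval_prefixes_def by blast
  then have "{x..y} = {a..a + Suc n} - {c}"
    using set_w by simp
  then have "c = a \<or> c = a + Suc n"
    using c by (rule interval_diff_singleton_endpoint)
  then show ?thesis
  proof
    assume "c = a"
    then have "set w = {Suc a..<Suc a + Suc n}"
      using set_w by (intro set_eqI) (simp, arith)
    then show ?thesis using w \<open>c = a\<close> unfolding single_peaked_on_def by simp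
  next
    assume "c = a + Suc n"
    then have "set w = {a..<a + Suc n}"
      using set_w by (intro set_eqI) (simp, arith)
    then show ?thesis using w \<open>c = a + Suc n\<close> unfolding single_peaked_on_def by simp
  qed
qed

lemma single_peaked_on_Suc_Suc_iff:
  "single_peaked_on a (Suc (Suc n)) v \<longleftrightarrow>
     (\<exists>w. v = w @ [a] \<and> single_peaked_on (Suc a) (Suc n) w) \<or>
     (\<exists>w. v = w @ [a + Suc n] \<and> single_peaked_on a (Suc n) w)"
proof
  assume sp: "single_peaked_on a (Suc (Suc n)) v"
  then have "v \<noteq> []" using length_single_peaked_on by fastforce
  then obtain w c where "v = w @ [c]" by (metis rev_exhaust)
  then show "(\<exists>w. v = w @ [a] \<and> single_peaked_on (Suc a) (Suc n) w) \<or>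
     (\<exists>w. v = w @ [a + Suc n] \<and> single_peaked_on a (Suc n) w)"
    using single_peaked_on_snocD sp by blast
next
  have "set (w @ [a]) = {a..<a + Suc (Suc n)}" if "single_peaked_on (Suc a) (Suc n) w" for w
    using that unfolding single_peaked_on_def by (intro set_eqI) (simp, arith)
  moreover have "set (w @ [a + Suc n]) = {a..<a + Suc (Suc n)}" if "single_peaked_on a (Suc n) w" for w
    using that unfolding single_peaked_on_def by (intro set_eqI) (simp, arith)
  ultimately show "single_peaked_on a (Suc (Suc n)) v"
    if "(\<exists>w. v = w @ [a] \<and> single_peaked_on (Suc a) (Suc n) w) \<or>
      (\<exists>w. v = w @ [a + Suc n] \<and> single_peaked_on a (Suc n) w)"
    using that single_peaked_on_snocI by blast
qed

fun single_peaked_votes :: "nat \<Rightarrow> nat \<Rightarrow> nat list list" where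
  "single_peaked_votes a 0 = [[]]"
| "single_peaked_votes a (Suc 0) = [[a]]"
| "single_peaked_votes a (Suc (Suc n)) =
     map (\<lambda>w. w @ [a]) (single_peaked_votes (Suc a) (Suc n)) @
     map (\<lambda>w. w @ [a + Suc n]) (single_peaked_votes a (Suc n))"

lemma set_single_peaked_votes: "set (single_peaked_votes a n) = {v. single_peaked_on a n v}"
proof (induction a n rule: single_peaked_votes.induct)
  case (1 a)
  then show ?case by (auto simp: single_peaked_on_def)
next
  case (2 a)
  have "single_peaked_on a (Suc 0) v \<longleftrightarrow> v = [a]" for v
  proof
    assume sp: "single_peaked_on a (Suc 0) v"
    then obtain x where "v = [x]"
      using length_single_peaked_on by (metis length_0_conv length_Suc_conv)
    then show "v = [a]" using sp by (simp add: single_peaked_on_def)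
  next
    have "interval_prefixes ([] @ [a])"
      unfolding interval_prefixes_snoc by (auto intro!: exI[of _ a])
    then show "single_peaked_on a (Suc 0) v" if "v = [a]"
      using that by (simp add: single_peaked_on_def)
  qed
  then show ?case by auto
next
  case (3 a n)
  have "v \<in> set (single_peaked_votes a (Suc (Suc n))) \<longleftrightarrow> single_peaked_on a (Suc (Suc n)) v" for v
    unfolding single_peaked_on_Suc_Suc_iff single_peaked_votes.simps set_append set_map 3 by blast
  then show ?case by blast
qed

lemma distinct_single_peaked_votes: "distinct (single_peaked_votes a n)"
  by (induction a n rule: single_peaked_votes.induct) (auto simp: distinct_map inj_on_def)

lemma length_single_peaked_votes: "length (single_peaked_votes a (Suc n)) = 2 ^ n"
  by (induction a "Suc n" arbitrary: a n rule: single_peaked_votes.induct) (auto split: nat.splits)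

definition binomial_int :: "nat \<Rightarrow> int \<Rightarrow> nat" where
  "binomial_int n k = (if k < 0 then 0 else n choose nat k)"

lemma binomial_int_0_left: "binomial_int 0 k = (if k = 0 then 1 else 0)"
  by (simp add: binomial_int_def)

lemma binomial_int_Suc_left:
  "binomial_int (Suc n) (k + 1) = binomial_int n k + binomial_int n (k + 1)"
proof (cases "k < 0")
  case True
  then show ?thesis by (cases "k = -1") (simp_all add: binomial_int_def)
next
  case False
  then have "nat (k + 1) = Suc (nat k)" by simp
  then show ?thesis using False by (simp add: binomial_int_def)
qed

lemma filter_nth_map_snoc:
  assumes "\<forall>w\<in>set ws. k < length w"
  shows "filter (\<lambda>v. v ! k = j) (map (\<lambda>w. w @ [c]) ws) =
    map (\<lambda>w. w @ [c]) (filter (\<lambda>w. w ! k = j) ws)"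
  using assms by (induction ws) (auto simp: nth_append)

lemma filter_last_map_snoc:
  assumes "\<forall>w\<in>set ws. length w = k"
  shows "filter (\<lambda>v. v ! k = j) (map (\<lambda>w. w @ [c]) ws) =
    (if c = j then map (\<lambda>w. w @ [c]) ws else [])"
  using assms by (induction ws) auto

lemma length_single_peaked_votes_elem: "w \<in> set (single_peaked_votes a n) \<Longrightarrow> length w = n"
  by (simp add: set_single_peaked_votes length_single_peaked_on)

text \<open>The count is doubled so that \<open>k = 0\<close>, where the two end points coincide, needs no
  special case.\<close>

lemma count_single_peaked_votes_nth:
  "2 * length (filter (\<lambda>v. v ! k = j) (single_peaked_votes a (k + 1 + r))) =
     2 ^ k * (binomial_int r (int j - int a) + binomial_int r (int j - int a - int k))"
proof (induction r arbitrary: a)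
  case 0
  show ?case
  proof (cases k)
    case 0
    then show ?thesis by (simp add: binomial_int_0_left)
  next
    case (Suc l)
    have "length (filter (\<lambda>v. v ! k = j) (single_peaked_votes a (k + 1))) =
        (if a = j then 2 ^ l else 0) + (if a + Suc l = j then 2 ^ l else 0)"
      using Suc by (simp add: filter_last_map_snoc length_single_peaked_votes_elem length_single_peaked_votes)
    then show ?thesis
      using Suc by (simp add: binomial_int_0_left)
  qed
next
  case (Suc r)
  have "length (filter (\<lambda>v. v ! k = j) (single_peaked_votes a (k + 1 + Suc r))) =
      length (filter (\<lambda>v. v ! k = j) (single_peaked_votes (Suc a) (k + 1 + r))) +
      length (filter (\<lambda>v. v ! k = j) (single_peaked_votes a (k + 1 + r)))"
    by (simp add: filter_nth_map_snoc length_single_peaked_votes_elem)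
  then have "2 * length (filter (\<lambda>v. v ! k = j) (single_peaked_votes a (k + 1 + Suc r))) =
      2 ^ k * (binomial_int r (int j - int a - 1) + binomial_int r (int j - int a - int k - 1)) +
      2 ^ k * (binomial_int r (int j - int a) + binomial_int r (int j - int a - int k))"
    using Suc.IH[of "Suc a"] Suc.IH[of a] by (simp add: algebra_simps)
  also have "\<dots> = 2 ^ k * (binomial_int (Suc r) (int j - int a) + binomial_int (Suc r) (int j - int a - int k))"
    using binomial_int_Suc_left[of r "int j - int a - 1"] binomial_int_Suc_left[of r "int j - int a - int k - 1"]
    by (simp add: algebra_simps)
  finally show ?case .
qed

lemma finite_votes: "finite {v. is_vote m v}"
proof (rule finite_subset)
  show "{v. is_vote m v} \<subseteq> {v. set v \<subseteq> {1..m} \<and> length v = m}"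
    unfolding is_vote_def using distinct_card by fastforce
qed (simp add: finite_lists_length_eq)

lemma walsh_event_prob_eq_count:
  "walsh_event_prob m P = real (length (filter P (single_peaked_votes 1 m))) / 2 ^ (m - 1)"
proof -
  have sp_set: "{v. single_peaked m v \<and> P v} = set (filter P (single_peaked_votes 1 m))"
    by (auto simp: set_single_peaked_votes single_peaked_iff_single_peaked_on)
  have "walsh_event_prob m P = (\<Sum>v\<in>{v. single_peaked m v \<and> P v}. 1 / 2 ^ (m - 1))"
    unfolding walsh_event_prob_def walsh_prob_def
    by (rule sum.mono_neutral_cong_right) (auto simp: single_peaked_def finite_votes)
  also have "\<dots> = real (card (set (filter P (single_peaked_votes 1 m)))) / 2 ^ (m - 1)"
    by (simp add: sp_set)
  also have "card (set (filter P (single_peaked_votes 1 m))) = length (filter P (single_peaked_votes 1 m))"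
    by (metis distinct_card distinct_filter distinct_single_peaked_votes)
  finally show ?thesis .
qed

lemma walsh_event_prob_nth:
  assumes "k < m"
  shows "walsh_event_prob m (\<lambda>v. v ! k = j) =
    (real (binomial_int (m - k - 1) (int j - 1)) + real (binomial_int (m - k - 1) (int j - 1 - int k)))
      / 2 ^ (m - k)"
proof -
  let ?count = "length (filter (\<lambda>v. v ! k = j) (single_peaked_votes 1 m))"
  let ?S = "real (binomial_int (m - k - 1) (int j - 1)) + real (binomial_int (m - k - 1) (int j - 1 - int k))"
  have "2 * ?count = 2 ^ k * (binomial_int (m - k - 1) (int j - 1) + binomial_int (m - k - 1) (int j - 1 - int k))"
    using count_single_peaked_votes_nth[of k j 1 "m - k - 1"] assms by simp
  then have count: "2 * real ?count = 2 ^ k * ?S"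
    by (metis of_nat_add of_nat_mult of_nat_numeral of_nat_power)
  have pow: "(2::real) ^ (m - 1) * 2 = 2 ^ k * 2 ^ (m - k)"
    using assms by (simp flip: power_add power_Suc2)
  have "walsh_event_prob m (\<lambda>v. v ! k = j) = 2 * real ?count / (2 ^ (m - 1) * 2)"
    unfolding walsh_event_prob_eq_count by simp
  also have "\<dots> = 2 ^ k * ?S / (2 ^ k * 2 ^ (m - k))"
    unfolding count pow ..
  finally show ?thesis
    by simp
qed

theorem corollary1:
  fixes m i j :: nat
  assumes "i \<in> {1..m}" and "j \<in> {1..m}"
  shows "walsh_event_prob m (\<lambda>v. v ! (i - 1) = j) =
           1 / 2 ^ (m - i + 1) * real ((m - i) choose (j - 1)) * (if j \<le> m - i + 1 then 1 else 0)
         + 1 / 2 ^ (m - i + 1) * real ((m - i) choose (j - i)) * (if j > i - 1 then 1 else 0)"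
proof -
  have i: "1 \<le> i" "i \<le> m" and j: "1 \<le> j" using assms by auto
  then have "i - 1 < m" "m - (i - 1) - 1 = m - i" "m - (i - 1) = m - i + 1"
    "int j - 1 - int (i - 1) = int j - int i"
    by auto
  then have "walsh_event_prob m (\<lambda>v. v ! (i - 1) = j) =
      (real (binomial_int (m - i) (int j - 1)) + real (binomial_int (m - i) (int j - int i)))
        / 2 ^ (m - i + 1)"
    using walsh_event_prob_nth[of "i - 1" m j] by (simp only:)
  also have "real (binomial_int (m - i) (int j - 1)) =
      real ((m - i) choose (j - 1)) * (if j \<le> m - i + 1 then 1 else 0)"
    using j by (auto simp: binomial_int_def nat_diff_distrib)
  also have "real (binomial_int (m - i) (int j - int i)) =
      real ((m - i) choose (j - i)) * (if j > i - 1 then 1 else 0)"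
    using i by (auto simp: binomial_int_def nat_diff_distrib)
  finally show ?thesis
    by (simp only: add_divide_distrib) simp
qed

end
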